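(* Let $p\ge 2$, $w\ge 0$, $z\in\mathbb{R}^{p-1}$. For $\lambda>0$ let $(\hat\beta^+(\lambda),\hat\beta^-(\lambda),\hat\theta(\lambda))$ be the unique solution of \[ \min_{\beta^\pm\in\mathbb{R},\,\theta\in\mathbb{R}^{p-1}}\ \frac12\bigl(w-(\beta^+-\beta^-)\bigr)^2+\frac12\|z-\theta\|_2^2+\lambda(\beta^++\beta^-)+\lambda\|\theta\|_1 \quad\text{s.t. } \beta^+\ge0,\ \beta^-\ge0,\ \|\theta\|_1\le\beta^++\beta^-. \] Then for each coordinate $k\in\{1,\dots,p-1\}$, the function $\lambda\mapsto|\hat\theta_k(\lambda)|$ is non-increasing on $(0,\infty)$.
   Context: $\|\cdot\|_1$ and $\|\cdot\|_2$ denote the $\ell_1$ and Euclidean norms. The solution of the displayed problem exists and is unique for every $\lambda>0$. *)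

theory Defs
  imports "HOL-Analysis.Analysis"
begin

text \<open>Coordinates of theta are indexed by a finite type 'n with CARD('n) = p - 1 (so p \<ge> 2).\<close>

definition l1norm :: "real ^ 'n \<Rightarrow> real" where
  "l1norm \<theta> = (\<Sum>i\<in>UNIV. \<bar>\<theta> $ i\<bar>)"

definition objective :: "real \<Rightarrow> real ^ 'n \<Rightarrow> real \<Rightarrow> real \<Rightarrow> real \<Rightarrow> real ^ 'n \<Rightarrow> real" where
  "objective w z lam bp bm \<theta> =
     (1/2) * (w - (bp - bm))^2 + (1/2) * (norm (z - \<theta>))^2 + lam * (bp + bm) + lam * l1norm \<theta>"

definition feasible :: "real \<Rightarrow> real \<Rightarrow> real ^ 'n \<Rightarrow> bool" where
  "feasible bp bm \<theta> \<longleftrightarrow> bp \<ge> 0 \<and> bm \<ge> 0 \<and> l1norm \<theta> \<le> bp + bm"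

definition is_solution :: "real \<Rightarrow> real ^ 'n \<Rightarrow> real \<Rightarrow> real \<times> real \<times> (real ^ 'n) \<Rightarrow> bool" where
  "is_solution w z lam s \<longleftrightarrow>
     (case s of (bp, bm, \<theta>) \<Rightarrow> feasible bp bm \<theta> \<and>
        (\<forall>bp' bm' \<theta>'. feasible bp' bm' \<theta>' \<longrightarrow>
            objective w z lam bp bm \<theta> \<le> objective w z lam bp' bm' \<theta>'))"

definition solution :: "real \<Rightarrow> real ^ 'n \<Rightarrow> real \<Rightarrow> real \<times> real \<times> (real ^ 'n)" where
  "solution w z lam = (THE s. is_solution w z lam s)"

definition theta_hat :: "real \<Rightarrow> real ^ 'n \<Rightarrow> real \<Rightarrow> real ^ 'n" where
  "theta_hat w z lam = snd (snd (solution w z lam))"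

end

theory Submission
  imports Defs
begin

text \<open>If \<open>\<mu>\<close> is the multiplier of the constraint \<open>\<parallel>\<theta>\<parallel>\<^sub>1 \<le> \<beta>\<^sup>+ + \<beta>\<^sup>-\<close>, stationarity in \<open>\<theta>\<close> makes
  \<open>\<theta>\<close> the soft-thresholding of \<open>z\<close> at level \<open>t = \<lambda> + \<mu>\<close>, stationarity in \<open>\<beta>\<^sup>\<plusminus>\<close> forces
  \<open>\<lambda> \<le> t \<le> 2\<lambda>\<close> and \<open>\<beta>\<^sup>+ - \<beta>\<^sup>- = w - 2\<lambda> + t\<close>, and complementary slackness pins down \<open>t\<close> as the
  (clamped) root of \<open>\<Sum>\<^sub>i (|z\<^sub>i| - t)\<^sub>+ = w - 2\<lambda> + t\<close>. The left side decreases in \<open>t\<close>, the right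
  side increases in \<open>t\<close> and decreases in \<open>\<lambda>\<close>, so the threshold grows with \<open>\<lambda>\<close> and every
  \<open>|\<theta>\<^sub>k| = (|z\<^sub>k| - t)\<^sub>+\<close> shrinks. We verify the candidate directly: the objective exceeds its
  value there by at least a positive definite quadratic in \<open>(\<beta>\<^sup>+ - \<beta>\<^sup>-, \<theta>)\<close>.\<close>

definition soft_threshold :: "real ^ 'n \<Rightarrow> real \<Rightarrow> real ^ 'n" where
  "soft_threshold z t = (\<chi> i. sgn (z $ i) * max (\<bar>z $ i\<bar> - t) 0)"

definition l1_excess :: "real ^ 'n \<Rightarrow> real \<Rightarrow> real" where
  "l1_excess z t = (\<Sum>i\<in>UNIV. max (\<bar>z $ i\<bar> - t) 0)"

lemma abs_soft_threshold_nth: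
  assumes "t \<ge> 0"
  shows "\<bar>soft_threshold z t $ i\<bar> = max (\<bar>z $ i\<bar> - t) 0"
  using assms by (cases "z $ i" "0::real" rule: linorder_cases)
    (auto simp: soft_threshold_def abs_mult)

lemma l1norm_soft_threshold: "t \<ge> 0 \<Longrightarrow> l1norm (soft_threshold z t) = l1_excess z t"
  by (simp add: l1norm_def l1_excess_def abs_soft_threshold_nth)

lemma l1_excess_nonneg: "l1_excess z t \<ge> 0"
  unfolding l1_excess_def by (rule sum_nonneg) auto

lemma l1_excess_antimono: "t1 \<le> t2 \<Longrightarrow> l1_excess z t2 \<le> l1_excess z t1"
  unfolding l1_excess_def by (rule sum_mono) auto

lemma continuous_on_l1_excess: "continuous_on A (l1_excess z)"
  unfolding l1_excess_def by (intro continuous_intros)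

lemma soft_threshold_real_quadratic_growth:
  fixes z x t :: real
  assumes "t \<ge> 0"
  defines "y \<equiv> sgn z * max (\<bar>z\<bar> - t) 0"
  shows "(1/2) * (z - y)\<^sup>2 + t * \<bar>y\<bar> + (1/2) * (x - y)\<^sup>2 \<le> (1/2) * (z - x)\<^sup>2 + t * \<bar>x\<bar>"
proof -
  consider "\<bar>z\<bar> \<le> t" | "z > t" | "z < - t" by linarith
  then show ?thesis
  proof cases
    case 1
    then have "y = 0" by (simp add: y_def)
    moreover have "z * x \<le> t * \<bar>x\<bar>"
      using 1 abs_ge_self[of "z * x"] mult_right_mono[OF 1, of "\<bar>x\<bar>"] by (simp add: abs_mult)
    ultimately show ?thesis by (simp add: power2_eq_square algebra_simps)
  next
    case 2
    then have y: "y = z - t" using assms(1) by (simp add: y_def)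
    have "t * x \<le> t * \<bar>x\<bar>" using assms(1) by (simp add: mult_left_mono)
    with 2 show ?thesis unfolding y by (simp add: power2_eq_square algebra_simps)
  next
    case 3
    then have y: "y = z + t" using assms(1) by (simp add: y_def)
    have "- t * x \<le> t * \<bar>x\<bar>" using assms(1) mult_left_mono[of "- x" "\<bar>x\<bar>" t] by simp
    with 3 show ?thesis unfolding y by (simp add: power2_eq_square algebra_simps)
  qed
qed

lemma power2_norm_vec: "(norm (v :: real ^ 'n))\<^sup>2 = (\<Sum>i\<in>UNIV. (v $ i)\<^sup>2)"
  unfolding power2_norm_eq_inner inner_vec_def by (simp add: power2_eq_square)

lemma soft_threshold_quadratic_growth:
  fixes z \<theta> :: "real ^ 'n"
  assumes "t \<ge> 0"
  shows "(1/2) * (norm (z - soft_threshold z t))\<^sup>2 + t * l1norm (soft_threshold z t)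
           + (1/2) * (norm (\<theta> - soft_threshold z t))\<^sup>2
         \<le> (1/2) * (norm (z - \<theta>))\<^sup>2 + t * l1norm \<theta>"
proof -
  let ?y = "soft_threshold z t"
  have "(\<Sum>i\<in>UNIV. (1/2) * (z$i - ?y$i)\<^sup>2 + t * \<bar>?y$i\<bar> + (1/2) * (\<theta>$i - ?y$i)\<^sup>2)
        \<le> (\<Sum>i\<in>UNIV. (1/2) * (z$i - \<theta>$i)\<^sup>2 + t * \<bar>\<theta>$i\<bar>)"
    using soft_threshold_real_quadratic_growth[OF assms]
    by (intro sum_mono) (simp add: soft_threshold_def)
  then show ?thesis
    by (simp add: power2_norm_vec l1norm_def sum.distrib sum_distrib_left)
qed

definition lasso_threshold :: "real \<Rightarrow> real ^ 'n \<Rightarrow> real \<Rightarrow> real \<Rightarrow> bool" where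
  "lasso_threshold w z lam t \<longleftrightarrow> lam \<le> t \<and> t \<le> 2 * lam
     \<and> (lam < t \<longrightarrow> w - 2 * lam + t \<le> l1_excess z t)
     \<and> (t < 2 * lam \<longrightarrow> l1_excess z t \<le> w - 2 * lam + t)"

lemma lasso_threshold_exists:
  assumes "lam > 0"
  obtains t where "lasso_threshold w z lam t"
proof -
  define \<phi> where "\<phi> t = l1_excess z t - (w - 2 * lam + t)" for t
  consider "\<phi> lam \<le> 0" | "\<phi> (2 * lam) \<ge> 0" | "\<phi> (2 * lam) < 0" "0 < \<phi> lam" by linarith
  then show ?thesis
  proof cases
    case 1
    with assms have "lasso_threshold w z lam lam" by (simp add: lasso_threshold_def \<phi>_def)
    then show ?thesis by (rule that)
  next
    case 2
    with assms have "lasso_threshold w z lam (2 * lam)" by (simp add: lasso_threshold_def \<phi>_def)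
    then show ?thesis by (rule that)
  next
    case 3
    have "continuous_on {lam..2 * lam} \<phi>"
      unfolding \<phi>_def by (intro continuous_intros continuous_on_l1_excess)
    then obtain t where "lam \<le> t" "t \<le> 2 * lam" "\<phi> t = 0"
      using IVT2'[of \<phi> "2 * lam" 0 lam] 3 assms by auto
    then have "lasso_threshold w z lam t" by (simp add: lasso_threshold_def \<phi>_def)
    then show ?thesis by (rule that)
  qed
qed

lemma lasso_threshold_mono:
  assumes "0 < lam1" "lam1 \<le> lam2"
    and "lasso_threshold w z lam1 t1" "lasso_threshold w z lam2 t2"
  shows "t1 \<le> t2"
proof (rule ccontr)
  assume "\<not> t1 \<le> t2"
  then have "t2 < t1" by simp
  with assms have "w - 2 * lam1 + t1 \<le> l1_excess z t1" "l1_excess z t2 \<le> w - 2 * lam2 + t2"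
    by (auto simp: lasso_threshold_def)
  moreover have "l1_excess z t1 \<le> l1_excess z t2"
    using \<open>t2 < t1\<close> by (intro l1_excess_antimono) simp
  ultimately show False using \<open>t2 < t1\<close> assms(2) by linarith
qed

text \<open>The candidate minimiser: \<open>b = \<beta>\<^sup>+ - \<beta>\<^sup>-\<close> and \<open>s = \<beta>\<^sup>+ + \<beta>\<^sup>-\<close>, where \<open>s\<close> is chosen so that
  \<open>\<lambda> s = (t - \<lambda>) \<parallel>\<theta>\<parallel>\<^sub>1 + (2\<lambda> - t) b\<close>, the value of the penalty under the multiplier \<open>t - \<lambda>\<close>.\<close>

definition lasso_diff :: "real \<Rightarrow> real \<Rightarrow> real \<Rightarrow> real" where
  "lasso_diff w lam t = w - 2 * lam + t"

definition lasso_sum :: "real \<Rightarrow> real ^ 'n \<Rightarrow> real \<Rightarrow> real \<Rightarrow> real" where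
  "lasso_sum w z lam t = ((t - lam) * l1_excess z t + (2 * lam - t) * lasso_diff w lam t) / lam"

definition lasso_candidate :: "real \<Rightarrow> real ^ 'n \<Rightarrow> real \<Rightarrow> real \<Rightarrow> real \<times> real \<times> (real ^ 'n)" where
  "lasso_candidate w z lam t =
     ((lasso_sum w z lam t + lasso_diff w lam t) / 2,
      (lasso_sum w z lam t - lasso_diff w lam t) / 2, soft_threshold z t)"

lemma lasso_candidate_eqD:
  assumes "lasso_candidate w z lam t = (bp, bm, \<theta>)"
  shows "bp - bm = lasso_diff w lam t" "bp + bm = lasso_sum w z lam t" "\<theta> = soft_threshold z t"
  using assms by (auto simp: lasso_candidate_def diff_divide_distrib[symmetric] add_divide_distrib[symmetric])

lemma lasso_sum_bounds:
  assumes "lam > 0" "w \<ge> 0" "lasso_threshold w z lam t"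
  shows "\<bar>lasso_diff w lam t\<bar> \<le> lasso_sum w z lam t" "l1_excess z t \<le> lasso_sum w z lam t"
proof -
  let ?T = "l1_excess z t" and ?b = "lasso_diff w lam t" and ?s = "lasso_sum w z lam t"
  have "?T \<ge> 0" by (rule l1_excess_nonneg)
  consider "t = lam" | "t = 2 * lam" | "lam < t" "t < 2 * lam"
    using assms(3) by (force simp: lasso_threshold_def)
  then have "\<bar>?b\<bar> \<le> ?s \<and> ?T \<le> ?s"
  proof cases
    case 1
    then have "?s = ?b" "?T \<le> ?b"
      using assms by (auto simp: lasso_sum_def lasso_diff_def lasso_threshold_def)
    then show ?thesis using \<open>?T \<ge> 0\<close> by auto
  next
    case 2
    then have "?s = ?T" "?b \<le> ?T" "?b = w"
      using assms by (auto simp: lasso_sum_def lasso_diff_def lasso_threshold_def)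
    then show ?thesis using assms(2) by auto
  next
    case 3
    then have "?T = ?b" using assms(3) by (auto simp: lasso_threshold_def lasso_diff_def)
    then have "?s = ?T" using assms(1) by (simp add: lasso_sum_def field_simps)
    then show ?thesis using \<open>?T = ?b\<close> \<open>?T \<ge> 0\<close> by auto
  qed
  then show "\<bar>?b\<bar> \<le> ?s" "?T \<le> ?s" by auto
qed

lemma feasible_lasso_candidate:
  assumes "lam > 0" "w \<ge> 0" "lasso_threshold w z lam t"
    and c: "lasso_candidate w z lam t = (bp, bm, \<theta>)"
  shows "feasible bp bm \<theta>"
proof -
  have "t \<ge> 0" using assms by (auto simp: lasso_threshold_def)
  then show ?thesis
    using lasso_sum_bounds[OF assms(1-3)] lasso_candidate_eqD[OF c]
    by (auto simp: feasible_def l1norm_soft_threshold)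
qed

text \<open>Dropping the slack of \<open>\<parallel>\<theta>'\<parallel>\<^sub>1 \<le> \<beta>\<^sup>+' + \<beta>\<^sup>-'\<close> and \<open>\<beta>\<^sup>+' - \<beta>\<^sup>-' \<le> \<beta>\<^sup>+' + \<beta>\<^sup>-'\<close>, weighted by
  \<open>t - \<lambda>\<close> and \<open>2\<lambda> - t\<close>, splits the objective into the soft-thresholding problem at level \<open>t\<close>
  and a quadratic in \<open>\<beta>\<^sup>+' - \<beta>\<^sup>-'\<close> centred at \<open>w - 2\<lambda> + t\<close>.\<close>

lemma objective_lasso_candidate_quadratic_growth:
  fixes z \<theta>' :: "real ^ 'n"
  assumes "lam > 0" "lasso_threshold w z lam t"
    and c: "lasso_candidate w z lam t = (bp, bm, \<theta>)"
    and "feasible bp' bm' \<theta>'"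
  shows "objective w z lam bp bm \<theta> + (1/2) * ((bp' - bm') - (bp - bm))\<^sup>2 + (1/2) * (norm (\<theta>' - \<theta>))\<^sup>2
         \<le> objective w z lam bp' bm' \<theta>'"
proof -
  note c = lasso_candidate_eqD[OF c]
  let ?b = "lasso_diff w lam t"
  have t: "lam \<le> t" "t \<le> 2 * lam" using assms(2) by (auto simp: lasso_threshold_def)
  then have "t \<ge> 0" using assms(1) by linarith
  have f: "bp' \<ge> 0" "bm' \<ge> 0" "l1norm \<theta>' \<le> bp' + bm'" using assms(4) by (auto simp: feasible_def)
  have growth: "(1/2) * (norm (z - \<theta>))\<^sup>2 + t * l1norm \<theta> + (1/2) * (norm (\<theta>' - \<theta>))\<^sup>2
         \<le> (1/2) * (norm (z - \<theta>'))\<^sup>2 + t * l1norm \<theta>'"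
    using soft_threshold_quadratic_growth[OF \<open>t \<ge> 0\<close>] c(3) by simp
  have penalty: "lam * l1norm \<theta> + lam * (bp + bm) = t * l1norm \<theta> + (2 * lam - t) * ?b"
    using assms(1) t c \<open>t \<ge> 0\<close> by (simp add: l1norm_soft_threshold lasso_sum_def field_simps)
  have "(t - lam) * l1norm \<theta>' \<le> (t - lam) * (bp' + bm')"
    "(2 * lam - t) * (bp' - bm') \<le> (2 * lam - t) * (bp' + bm')"
    using f t by (intro mult_left_mono; simp)+
  then have penalty': "t * l1norm \<theta>' + (2 * lam - t) * (bp' - bm') \<le> lam * l1norm \<theta>' + lam * (bp' + bm')"
    by (simp add: algebra_simps)
  have "(1/2) * (w - (bp' - bm'))\<^sup>2 + (2 * lam - t) * (bp' - bm')
        = (1/2) * (w - ?b)\<^sup>2 + (2 * lam - t) * ?b + (1/2) * ((bp' - bm') - ?b)\<^sup>2"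
    by (simp add: lasso_diff_def power2_eq_square algebra_simps)
  with growth penalty penalty' show ?thesis
    unfolding objective_def c(1) by linarith
qed

lemma is_solution_lasso_candidate:
  assumes "lam > 0" "w \<ge> 0" "lasso_threshold w z lam t"
  shows "is_solution w z lam (lasso_candidate w z lam t)"
proof -
  obtain bp bm \<theta> where c: "lasso_candidate w z lam t = (bp, bm, \<theta>)"
    using prod_cases3 by blast
  have "objective w z lam bp bm \<theta> \<le> objective w z lam bp' bm' \<theta>'"
    if "feasible bp' bm' \<theta>'" for bp' bm' \<theta>'
    using objective_lasso_candidate_quadratic_growth[OF assms(1,3) c that]
      zero_le_power2[of "(bp' - bm') - (bp - bm)"] zero_le_power2[of "norm (\<theta>' - \<theta>)"]
    by linarith
  with feasible_lasso_candidate[OF assms c] c show ?thesis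
    by (simp add: is_solution_def)
qed

lemma is_solution_unique_lasso_candidate:
  assumes "lam > 0" "w \<ge> 0" "lasso_threshold w z lam t"
    and sol: "is_solution w z lam (bp', bm', \<theta>')"
  shows "(bp', bm', \<theta>') = lasso_candidate w z lam t"
proof -
  obtain bp bm \<theta> where c: "lasso_candidate w z lam t = (bp, bm, \<theta>)"
    using prod_cases3 by blast
  have feas: "feasible bp' bm' \<theta>'"
    and min: "objective w z lam bp' bm' \<theta>' \<le> objective w z lam bp bm \<theta>"
    using sol feasible_lasso_candidate[OF assms(1-3) c] by (simp_all add: is_solution_def)
  from objective_lasso_candidate_quadratic_growth[OF assms(1,3) c feas] min
  have "((bp' - bm') - (bp - bm))\<^sup>2 = 0" "(norm (\<theta>' - \<theta>))\<^sup>2 = 0"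
    and same: "objective w z lam bp' bm' \<theta>' = objective w z lam bp bm \<theta>"
    using zero_le_power2[of "(bp' - bm') - (bp - bm)"] zero_le_power2[of "norm (\<theta>' - \<theta>)"]
    by linarith+
  then have diff: "bp' - bm' = bp - bm" and \<theta>: "\<theta>' = \<theta>" by simp_all
  have "lam * (bp' + bm') = lam * (bp + bm)"
    using same unfolding objective_def \<theta> diff by simp
  then have "bp' + bm' = bp + bm" using assms(1) by simp
  with diff \<theta> c show ?thesis by simp
qed

lemma theta_hat_eq_soft_threshold:
  assumes "lam > 0" "w \<ge> 0" "lasso_threshold w z lam t"
  shows "theta_hat w z lam = soft_threshold z t"
proof -
  have "solution w z lam = lasso_candidate w z lam t"
    unfolding solution_def
    using is_solution_lasso_candidate[OF assms] is_solution_unique_lasso_candidate[OF assms]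
    by (intro the_equality) auto
  then show ?thesis by (simp add: theta_hat_def lasso_candidate_def)
qed

theorem proposition2:
  fixes w :: real and z :: "real ^ 'n"
  assumes "w \<ge> 0"
  shows "\<forall>k. \<forall>lam1 lam2. 0 < lam1 \<longrightarrow> lam1 \<le> lam2 \<longrightarrow>
           \<bar>theta_hat w z lam2 $ k\<bar> \<le> \<bar>theta_hat w z lam1 $ k\<bar>"
proof (intro allI impI)
  fix k :: 'n and lam1 lam2 :: real
  assume lam: "0 < lam1" "lam1 \<le> lam2"
  then have "0 < lam2" by linarith
  obtain t1 where t1: "lasso_threshold w z lam1 t1" using lasso_threshold_exists[OF lam(1)] .
  obtain t2 where t2: "lasso_threshold w z lam2 t2" using lasso_threshold_exists[OF \<open>0 < lam2\<close>] .
  have "t1 \<le> t2" using lasso_threshold_mono[OF lam t1 t2] .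
  moreover have "t1 \<ge> 0" using t1 lam by (auto simp: lasso_threshold_def)
  ultimately show "\<bar>theta_hat w z lam2 $ k\<bar> \<le> \<bar>theta_hat w z lam1 $ k\<bar>"
    using theta_hat_eq_soft_threshold[OF lam(1) assms t1]
      theta_hat_eq_soft_threshold[OF \<open>0 < lam2\<close> assms t2]
    by (simp add: abs_soft_threshold_nth)
qed

end
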